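(* For every strategy profile $s$ with $S_0(s)\vee S_1(s)$: if $\mathsf{SBcAes}(s)$ then $\mathsf{SPE}(s)$.
   Context: Let $P=\{A,B\}$ and $\mathrm{Choice}=\{d,r\}$; a payoff function is $f:P\to\mathbb{R}$. Strategy profiles are elements of the final coalgebra of $X\mapsto\mathbb{R}^P+P\times\mathrm{Choice}\times X\times X$ (finite or infinite trees $\langle f\rangle$ or $\langle p,c,s_d,s_r\rangle$, equality being bisimilarity). The payoff $\widehat{s}$ is the partial function given by $\widehat{\langle f\rangle}=f$, $\widehat{\langle p,d,s_d,s_r\rangle}=\widehat{s_d}$, $\widehat{\langle p,r,s_d,s_r\rangle}=\widehat{s_r}$. Convergence $\downarrow$: least predicate with $\downarrow(s)$ iff $s=\langle f\rangle$, or $s=\langle p,d,s_d,s_r\rangle\wedge\downarrow(s_d)$, or $s=\langle p,r,s_d,s_r\rangle\wedge\downarrow(s_r)$. Strong convergence $\Downarrow$: greatest predicate with $\Downarrow(s)$ iff $s=\langle f\rangle$, or $s=\langle p,c,s_d,s_r\rangle$ with $\downarrow(s),\Downarrow(s_d),\Downarrow(s_r)$. For a predicate $\Phi$, $\Box\Phi$ is the greatest predicate such that $\Box\Phi(s)$ iff $\Phi(s)$ and, whenever $s=\langle p,c,s_d,s_r\rangle$, $\Box\Phi(s_d)$ and $\Box\Phi(s_r)$. $\mathsf{PE}(s)$ holds iff $\Downarrow(s)$ and (if $s=\langle p,d,s_d,s_r\rangle$ then $\widehat{s_d}(p)\ge\widehat{s_r}(p)$) and (if $s=\langle p,r,s_d,s_r\rangle$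 then $\widehat{s_r}(p)\ge\widehat{s_d}(p)$); $\mathsf{SPE}=\Box\,\mathsf{PE}$. Let $f_{0,1}=(A\mapsto0,B\mapsto1)$, $f_{1,0}=(A\mapsto1,B\mapsto0)$. $S_0,S_1$ are the greatest predicates with $S_0(s)$ iff $s=\langle A,c,\langle f_{0,1}\rangle,s'\rangle$ with $S_1(s')$, and $S_1(s)$ iff $s=\langle B,c,\langle f_{1,0}\rangle,s'\rangle$ with $S_0(s')$. $\mathsf{BcAes}$ ("B continues and A eventually stops") is the least predicate such that $\mathsf{BcAes}(s)$ holds iff: whenever $s=\langle p,c,\langle f\rangle,s'\rangle$, then ($p=B$, $f=f_{1,0}$, $c=r$, $\mathsf{BcAes}(s')$) or ($p=A$, $f=f_{0,1}$, and ($c=d$ or $\mathsf{BcAes}(s')$)). $\mathsf{SBcAes}=\Box\,\mathsf{BcAes}$. *)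

theory Defs
  imports Complex_Main
begin

datatype agent = A | B
datatype choice = d | r

type_synonym payoff_fun = "agent \<Rightarrow> real"

codatatype strat = Leaf payoff_fun | Node agent choice strat strat

inductive conv :: "strat \<Rightarrow> bool" where
  "(s = Leaf f) \<Longrightarrow> conv s"
| "s = Node p d sd sr \<Longrightarrow> conv sd \<Longrightarrow> conv s"
| "s = Node p r sd sr \<Longrightarrow> conv sr \<Longrightarrow> conv s"

partial_function (option) payoff :: "strat \<Rightarrow> payoff_fun option" where
  "payoff s = (case s of Leaf f \<Rightarrow> Some f
      | Node p c sd sr \<Rightarrow> (if c = d then payoff sd else payoff sr))"

coinductive sconv :: "strat \<Rightarrow> bool" where
  "(s = Leaf f) \<Longrightarrow> sconv s"
| "s = Node p c sd sr \<Longrightarrow> conv s \<Longrightarrow> sconv sd \<Longrightarrow> sconv sr \<Longrightarrow> sconv s"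

coinductive Always :: "(strat \<Rightarrow> bool) \<Rightarrow> strat \<Rightarrow> bool" for \<Phi> where
  "\<Phi> s \<Longrightarrow> (\<forall>p c sd sr. s = Node p c sd sr \<longrightarrow> Always \<Phi> sd \<and> Always \<Phi> sr)
     \<Longrightarrow> Always \<Phi> s"

definition PE :: "strat \<Rightarrow> bool" where
  "PE s \<longleftrightarrow> sconv s
     \<and> (\<forall>p sd sr. s = Node p d sd sr \<longrightarrow> the (payoff sd) p \<ge> the (payoff sr) p)
     \<and> (\<forall>p sd sr. s = Node p r sd sr \<longrightarrow> the (payoff sr) p \<ge> the (payoff sd) p)"

definition SPE :: "strat \<Rightarrow> bool" where
  "SPE = Always PE"

definition f01 :: payoff_fun where
  "f01 = (\<lambda>x. if x = A then 0 else 1)"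

definition f10 :: payoff_fun where
  "f10 = (\<lambda>x. if x = A then 1 else 0)"

coinductive S0 :: "strat \<Rightarrow> bool" and S1 :: "strat \<Rightarrow> bool" where
  "s = Node A c (Leaf f01) s' \<Longrightarrow> S1 s' \<Longrightarrow> S0 s"
| "s = Node B c (Leaf f10) s' \<Longrightarrow> S0 s' \<Longrightarrow> S1 s"

text \<open>"B continues and A eventually stops" (least predicate).\<close>
inductive BcAes :: "strat \<Rightarrow> bool" where
  "(\<forall>p c f s'. s = Node p c (Leaf f) s' \<longrightarrow>
      ((p = B \<and> f = f10 \<and> c = r \<and> BcAes s')
       \<or> (p = A \<and> f = f01 \<and> (c = d \<or> BcAes s')))) \<Longrightarrow> BcAes s"

definition SBcAes :: "strat \<Rightarrow> bool" where
  "SBcAes = Always BcAes"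

end

theory Submission
  imports Defs
begin

text \<open>
  In an alternating profile satisfying SBcAes, B always continues and A eventually stops, so
  every non-leaf subgame converges with payoff f01. At an A-node both alternatives then give A
  the payoff 0; at a B-node continuing gives B the payoff 1, against 0 for stopping. Non-leaf
  subgames of such a profile are again of this kind, so every subgame is a Nash equilibrium.
\<close>

lemma payoff_Leaf [simp]: "payoff (Leaf f) = Some f"
  by (subst payoff.simps) simp

lemma payoff_Node_d [simp]: "payoff (Node p d sd sr) = payoff sd"
  by (subst payoff.simps) simp

lemma payoff_Node_r [simp]: "payoff (Node p r sd sr) = payoff sr"
  by (subst payoff.simps) simp

lemma Always_selfD: "Always \<Phi> s \<Longrightarrow> \<Phi> s"
  by (erule Always.cases) auto

lemma Always_childD:
  "Always \<Phi> (Node p c sd sr) \<Longrightarrow> Always \<Phi> sd \<and> Always \<Phi> sr"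
  by (erule Always.cases) auto

lemma Always_invariant:
  assumes "Q s"
    and "\<And>s. Q s \<Longrightarrow> \<Phi> s"
    and "\<And>s p c sd sr. Q s \<Longrightarrow> s = Node p c sd sr \<Longrightarrow> Q sd \<and> Q sr"
  shows "Always \<Phi> s"
  using assms(1)
proof (coinduction arbitrary: s rule: Always.coinduct)
  case (Always s)
  then show ?case using assms(2,3) by blast
qed

lemma S0_or_S1_Node:
  assumes "S0 s \<or> S1 s" and "s = Node p c sd sr"
  shows "(p = A \<and> sd = Leaf f01 \<and> S1 sr) \<or> (p = B \<and> sd = Leaf f10 \<and> S0 sr)"
  using assms by (auto elim: S0.cases S1.cases)

lemma BcAes_Node:
  assumes "BcAes (Node p c (Leaf f) s')"
  shows "(p = B \<and> f = f10 \<and> c = r \<and> BcAes s') \<or> (p = A \<and> f = f01 \<and> (c = d \<or> BcAes s'))"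
  using assms by (cases rule: BcAes.cases) blast

lemma BcAes_conv_payoff_f01:
  assumes "BcAes s" and "S0 s \<or> S1 s"
  shows "conv s \<and> payoff s = Some f01"
  using assms
proof (induction rule: BcAes.induct)
  case (1 s)
  from \<open>S0 s \<or> S1 s\<close> obtain p c f s' where s: "s = Node p c (Leaf f) s'"
    and alt: "(p = A \<and> f = f01 \<and> S1 s') \<or> (p = B \<and> f = f10 \<and> S0 s')"
    by (auto elim: S0.cases S1.cases)
  show ?case
  proof (cases c)
    case d
    with "1.IH" s have "f = f01" by blast
    with d s show ?thesis by (auto intro: conv.intros)
  next
    case r
    with "1.IH" s alt have "conv s' \<and> payoff s' = Some f01" by blast
    with r s show ?thesis by (auto intro: conv.intros)
  qed
qed

definition SBcAes_subgame :: "strat \<Rightarrow> bool" where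
  "SBcAes_subgame s \<longleftrightarrow> (\<exists>f. s = Leaf f) \<or> ((S0 s \<or> S1 s) \<and> SBcAes s)"

lemma SBcAes_subgame_children:
  assumes "SBcAes_subgame s" and "s = Node p c sd sr"
  shows "SBcAes_subgame sd \<and> SBcAes_subgame sr"
proof -
  from assms have alt: "S0 s \<or> S1 s" and "SBcAes s" by (auto simp: SBcAes_subgame_def)
  then have "SBcAes sr" using assms(2) Always_childD unfolding SBcAes_def by blast
  with S0_or_S1_Node[OF alt assms(2)] show ?thesis by (auto simp: SBcAes_subgame_def)
qed

lemma SBcAes_subgame_conv:
  assumes "SBcAes_subgame s"
  shows "conv s"
proof (cases s)
  case (Leaf f)
  then show ?thesis by (auto intro: conv.intros)
next
  case Node
  with assms have "S0 s \<or> S1 s" "BcAes s"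
    using Always_selfD by (auto simp: SBcAes_subgame_def SBcAes_def)
  then show ?thesis using BcAes_conv_payoff_f01 by blast
qed

lemma SBcAes_subgame_sconv:
  assumes "SBcAes_subgame s"
  shows "sconv s"
  using assms
proof (coinduction arbitrary: s rule: sconv.coinduct)
  case (sconv s)
  show ?case
  proof (cases s)
    case (Leaf f)
    then show ?thesis by blast
  next
    case (Node p c sd sr)
    then show ?thesis
      using sconv SBcAes_subgame_conv SBcAes_subgame_children by blast
  qed
qed

lemma SBcAes_subgame_PE:
  assumes "SBcAes_subgame s"
  shows "PE s"
proof (cases s)
  case (Leaf f)
  then show ?thesis by (auto simp: PE_def intro: sconv.intros)
next
  case (Node p c sd sr)
  with assms have alt: "S0 s \<or> S1 s" and "SBcAes s"
    by (auto simp: SBcAes_subgame_def)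
  then have Bs: "BcAes s" and Bsr: "BcAes sr"
    using Node Always_selfD Always_childD unfolding SBcAes_def by metis+
  have children: "(p = A \<and> sd = Leaf f01 \<and> S1 sr) \<or> (p = B \<and> sd = Leaf f10 \<and> S0 sr)"
    using S0_or_S1_Node[OF alt Node] .
  then have sr: "payoff sr = Some f01"
    using BcAes_conv_payoff_f01[OF Bsr] by blast
  have B_continues: "c = r" if "p = B"
    using BcAes_Node Bs Node children that by blast
  have "sconv s"
    using SBcAes_subgame_sconv[OF assms] .
  with Node children sr B_continues show ?thesis
    by (cases c) (auto simp: PE_def f01_def f10_def)
qed

theorem mainTheorem10:
  fixes s :: strat
  assumes "S0 s \<or> S1 s"
    and "SBcAes s"
  shows "SPE s"
  unfolding SPE_def
proof (rule Always_invariant[where Q = SBcAes_subgame])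
  show "SBcAes_subgame s" using assms by (simp add: SBcAes_subgame_def)
qed (use SBcAes_subgame_PE SBcAes_subgame_children in blast)+

end
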